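(* Let a product two-action game with $m$ players, with data $\underline v$ and $a^i_j$ as in the context, be given. For $\pi\in S_m$ put $$EC(\pi):=\{\underline\gamma\in[0,1]^m \mid L(\underline\gamma)=F(\pi),\ \gamma^j=a^{\pi(j)}_j \text{ for all } j\in\mathcal A\setminus F(\pi)\}.$$ Then the set of equilibrium candidates of the game equals $\bigcup_{\pi\in S_m}EC(\pi)$, and this union is disjoint. Moreover $|EC(\pi)|=2^{|F(\pi)|}$ for every $\pi\in S_m$, and the total number of equilibrium candidates is $$\sum_{l=0}^m\binom{m}{l}2^l\cdot !(m-l)=V(m).$$
   Context: Fix an integer $m\ge 1$ and $\mathcal A=\{1,\dots,m\}$. A two-action game is a finite game in normal form with player set $\mathcal A$ in which each player $i$ has exactly two pure strategies $s^i_0,s^i_1$, together with utility functions $U^i:S\to\mathbb R$, where $S=\prod_{i\in\mathcal A}\{s^i_0,s^i_1\}$. A mixed strategy combination is identified with $\underline\gamma=(\gamma^1,\dots,\gamma^m)\in[0,1]^m$, where $\gamma^i$ is the probability with which player $i$ plays $s^i_1$. The expected utility $V^i$ is the multilinear extension $V^i(\underline\gamma)=\sum_{(j_1,\dots,j_m)\in\{0,1\}^m}\prod_{k=1}^m p_k(j_k)\,U^i(s^1_{j_1},\dots,s^m_{j_m})$ with $p_k(1)=\gamma^k$, $p_k(0)=1-\gamma^k$. Write $\underline\gamma^{-i}=(\gamma^j)_{j\ne i}$ and $\lambda^i(\underline\gamma^{-i}):=V^i(\underline\gamma)|_{\gamma^i=1}-V^i(\underline\gamma)|_{\gamma^i=0}$,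 a polynomial in $\underline\gamma^{-i}$. A Nash equilibrium is a point $\underline\gamma\in[0,1]^m$ such that for every $i$: $\lambda^i(\underline\gamma^{-i})=0$ if $0<\gamma^i<1$; $\lambda^i(\underline\gamma^{-i})\le 0$ if $\gamma^i=0$; $\lambda^i(\underline\gamma^{-i})\ge 0$ if $\gamma^i=1$. An equilibrium candidate is a point $\underline\gamma\in[0,1]^m$ with $\lambda^i(\underline\gamma^{-i})=0$ for every $i$ with $0<\gamma^i<1$. For $\underline\gamma$ put $L_0(\underline\gamma)=\{i:\gamma^i=0\}$, $L_1(\underline\gamma)=\{i:\gamma^i=1\}$, $L(\underline\gamma)=L_0(\underline\gamma)\cup L_1(\underline\gamma)$. A two-action game is a product two-action game if there exist $\underline v=(v_1,\dots,v_m)\in\{0,1\}^m$ and numbers $a^i_j\in(0,1)$ for $i,j\in\mathcal A$, $i\ne j$, with $a^{i_1}_j\neq a^{i_2}_j$ whenever $i_1\neq i_2$ and both differ from $j$, such that $\lambda^i(\underline\gamma^{-i})=(-1)^{v_i}\prod_{j\in\mathcal A\setminus\{i\}}(\gamma^j-a^i_j)$ for every $i\in\mathcal A$. For $\pi\in S_m$, $F(\pi)=\{i\in\mathcal A:\pi(i)=i\}$ is its set of fixed points. $\mathrm{Der}_m$ denotes the set of derangements (permutations without fixed points) in $S_m$, and the subfactorial $!n$ is the number of derangements of an $n$-element set ($!0=1$, $!1=0$). $V(m):=\sum_{l=0}^m\binom{m}{l}2^l\cdot!(m-l)$. *)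

theory Defs
  imports Complex_Main "HOL-Library.FuncSet" "HOL-Combinatorics.Combinatorics"
begin

text \<open>Pure strategy of player k: False = s_0, True = s_1.
  A mixed strategy combination is gamma :: nat \<Rightarrow> real, gamma k = prob. of s_1.\<close>

definition players :: "nat \<Rightarrow> nat set" where
  "players m = {1..m}"

definition pure_profiles :: "nat \<Rightarrow> (nat \<Rightarrow> bool) set" where
  "pure_profiles m = PiE (players m) (\<lambda>_. UNIV)"

definition mixed_profiles :: "nat \<Rightarrow> (nat \<Rightarrow> real) set" where
  "mixed_profiles m = PiE (players m) (\<lambda>_. {0..1})"

definition prob_of :: "real \<Rightarrow> bool \<Rightarrow> real" where
  "prob_of g b = (if b then g else 1 - g)"

definition exp_util :: "nat \<Rightarrow> (nat \<Rightarrow> (nat \<Rightarrow> bool) \<Rightarrow> real) \<Rightarrow> nat \<Rightarrow> (nat \<Rightarrow> real) \<Rightarrow> real" where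
  "exp_util m U i gamma =
     (\<Sum>s\<in>pure_profiles m. (\<Prod>k\<in>players m. prob_of (gamma k) (s k)) * U i s)"

definition lam :: "nat \<Rightarrow> (nat \<Rightarrow> (nat \<Rightarrow> bool) \<Rightarrow> real) \<Rightarrow> nat \<Rightarrow> (nat \<Rightarrow> real) \<Rightarrow> real" where
  "lam m U i gamma = exp_util m U i (gamma(i := 1)) - exp_util m U i (gamma(i := 0))"

definition product_game ::
  "nat \<Rightarrow> (nat \<Rightarrow> (nat \<Rightarrow> bool) \<Rightarrow> real) \<Rightarrow> (nat \<Rightarrow> nat) \<Rightarrow> (nat \<Rightarrow> nat \<Rightarrow> real) \<Rightarrow> bool" where
  "product_game m U v a \<longleftrightarrow>
     (\<forall>i\<in>players m. v i \<in> {0, 1}) \<and>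
     (\<forall>i\<in>players m. \<forall>j\<in>players m. i \<noteq> j \<longrightarrow> 0 < a i j \<and> a i j < 1) \<and>
     (\<forall>j\<in>players m. \<forall>i1\<in>players m. \<forall>i2\<in>players m.
        i1 \<noteq> i2 \<and> i1 \<noteq> j \<and> i2 \<noteq> j \<longrightarrow> a i1 j \<noteq> a i2 j) \<and>
     (\<forall>i\<in>players m. \<forall>gamma :: nat \<Rightarrow> real.
        lam m U i gamma = (-1) ^ (v i) * (\<Prod>j\<in>players m - {i}. (gamma j - a i j)))"

definition equilibrium_candidates :: "nat \<Rightarrow> (nat \<Rightarrow> (nat \<Rightarrow> bool) \<Rightarrow> real) \<Rightarrow> (nat \<Rightarrow> real) set" where
  "equilibrium_candidates m U =
     {gamma \<in> mixed_profiles m. \<forall>i\<in>players m. 0 < gamma i \<and> gamma i < 1 \<longrightarrow> lam m U i gamma = 0}"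

definition Lset :: "nat \<Rightarrow> (nat \<Rightarrow> real) \<Rightarrow> nat set" where
  "Lset m gamma = {i\<in>players m. gamma i = 0 \<or> gamma i = 1}"

definition fixpts :: "nat \<Rightarrow> (nat \<Rightarrow> nat) \<Rightarrow> nat set" where
  "fixpts m p = {i\<in>players m. p i = i}"

definition EC :: "nat \<Rightarrow> (nat \<Rightarrow> nat \<Rightarrow> real) \<Rightarrow> (nat \<Rightarrow> nat) \<Rightarrow> (nat \<Rightarrow> real) set" where
  "EC m a p = {gamma \<in> mixed_profiles m. Lset m gamma = fixpts m p \<and>
                 (\<forall>j\<in>players m - fixpts m p. gamma j = a (p j) j)}"

definition subfact :: "nat \<Rightarrow> nat" where
  "subfact n = card {p. p permutes {1..n} \<and> (\<forall>x\<in>{1..n}. p x \<noteq> x)}"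

definition Vnum :: "nat \<Rightarrow> nat" where
  "Vnum m = (\<Sum>l=0..m. (m choose l) * 2 ^ l * subfact (m - l))"

end

theory Submission
  imports Defs
begin

text \<open>Since \<open>\<lambda>\<^sup>i\<close> is a nonzero multiple of \<open>\<Prod>\<^sub>j\<^sub>\<noteq>\<^sub>i (\<gamma>\<^sup>j - a\<^sup>i\<^sub>j)\<close>, a profile is
  an equilibrium candidate iff every player \<open>i\<close> with an interior strategy has a partner
  \<open>j \<noteq> i\<close> with \<open>\<gamma>\<^sup>j = a\<^sup>i\<^sub>j\<close>. As the thresholds \<open>a\<^sup>i\<^sub>j\<close> lie in \<open>(0,1)\<close> and are pairwise
  distinct for fixed \<open>j\<close>, the partner is again interior and determines \<open>i\<close>; so choosing
  partners is a fixed-point-free injection of the interior players into themselves, and its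
  inverse, extended by the identity, is the unique \<open>\<pi>\<close> with \<open>\<gamma> \<in> EC(\<pi>)\<close>. Within \<open>EC(\<pi>)\<close>
  only the pure strategies on \<open>F(\<pi>)\<close> are free, and grouping permutations by their
  fixed-point sets yields \<open>V(m)\<close>.\<close>

lemma card_derangements:
  assumes "finite T"
  shows "card {p. p permutes T \<and> (\<forall>x\<in>T. p x \<noteq> x)} = subfact (card T)"
proof -
  obtain h where "bij_betw h {1..card T} T"
    using finite_same_card_bij[of "{1..card T}" T] assms by auto
  from bij_betw_same_card[OF bij_betw_derangements[OF this]] show ?thesis
    by (simp add: subfact_def)
qed

lemma permutes_with_fixpoints_eq_derangements:
  assumes "F \<subseteq> S"
  shows "{p. p permutes S \<and> {i\<in>S. p i = i} = F}
       = {p. p permutes (S - F) \<and> (\<forall>x\<in>S - F. p x \<noteq> x)}"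
proof -
  have "p permutes S \<and> {i\<in>S. p i = i} = F \<longleftrightarrow> p permutes (S - F) \<and> (\<forall>x\<in>S - F. p x \<noteq> x)"
    for p
  proof
    assume "p permutes S \<and> {i\<in>S. p i = i} = F"
    then have p: "p permutes S" and F: "F = {i\<in>S. p i = i}" by auto
    have "p permutes (S - F)" by (rule permutes_superset[OF p]) (auto simp: F)
    then show "p permutes (S - F) \<and> (\<forall>x\<in>S - F. p x \<noteq> x)" using F by auto
  next
    assume p: "p permutes (S - F) \<and> (\<forall>x\<in>S - F. p x \<noteq> x)"
    then show "p permutes S \<and> {i\<in>S. p i = i} = F"
      using assms permutes_subset[of p "S - F" S] permutes_not_in[of p "S - F"] by auto
  qed
  then show ?thesis by blast
qed

lemma sum_power_card_fixpoints:
  assumes S: "finite S" and n: "card S = n"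
  shows "(\<Sum>p | p permutes S. (c::nat) ^ card {i\<in>S. p i = i})
       = (\<Sum>l=0..n. (n choose l) * c ^ l * subfact (n - l))"
proof -
  let ?Fix = "\<lambda>p. {i\<in>S. p i = i}" and ?Perm = "{p. p permutes S}"
  have "(\<Sum>p\<in>?Perm. c ^ card (?Fix p))
      = (\<Sum>F\<in>Pow S. \<Sum>p\<in>{p\<in>?Perm. ?Fix p = F}. c ^ card (?Fix p))"
    by (rule sum.group[symmetric]) (auto simp: S finite_permutations)
  also have "\<dots> = (\<Sum>F\<in>Pow S. subfact (n - card F) * c ^ card F)"
  proof (rule sum.cong[OF refl])
    fix F assume F: "F \<in> Pow S"
    have "(\<Sum>p\<in>{p\<in>?Perm. ?Fix p = F}. c ^ card (?Fix p))
        = card {p. p permutes S \<and> ?Fix p = F} * c ^ card F" by simp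
    also have "\<dots> = subfact (n - card F) * c ^ card F"
      using F S n by (simp add: permutes_with_fixpoints_eq_derangements card_derangements
          card_Diff_subset finite_subset)
    finally show "(\<Sum>p\<in>{p\<in>?Perm. ?Fix p = F}. c ^ card (?Fix p))
        = subfact (n - card F) * c ^ card F" .
  qed
  also have "\<dots> = (\<Sum>l=0..n. \<Sum>F\<in>{F\<in>Pow S. card F = l}. subfact (n - card F) * c ^ card F)"
    by (rule sum.group[symmetric]) (use S n in \<open>auto dest: card_mono[OF S]\<close>)
  also have "\<dots> = (\<Sum>l=0..n. (n choose l) * c ^ l * subfact (n - l))"
    using n_subsets[OF S] n by (intro sum.cong) (simp_all add: Pow_def)
  finally show ?thesis .
qed

lemma inj_on_endo_inverse_permutes:
  assumes "finite N" "c ` N \<subseteq> N" "inj_on c N"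
  obtains p where "p permutes N" "\<And>x. x \<in> N \<Longrightarrow> c (p x) = x"
proof
  have c: "bij_betw c N N"
    using endo_inj_surj[OF assms] assms(3) by (simp add: bij_betw_def)
  let ?p = "\<lambda>x. if x \<in> N then inv_into N c x else x"
  have "bij_betw ?p N N"
    by (rule bij_betw_cong[THEN iffD1, OF _ bij_betw_inv_into[OF c]]) simp
  then show "?p permutes N" by (rule bij_imp_permutes) simp
  show "\<And>x. x \<in> N \<Longrightarrow> c (?p x) = x" using c by (simp add: bij_betw_inv_into_right)
qed

lemma product_game_lam_eq_0_iff:
  assumes "product_game m U v a" "i \<in> players m"
  shows "lam m U i g = 0 \<longleftrightarrow> (\<exists>j\<in>players m - {i}. g j = a i j)"
proof -
  have "lam m U i g = (-1) ^ v i * (\<Prod>j\<in>players m - {i}. g j - a i j)"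
    using assms unfolding product_game_def by blast
  then show ?thesis by (simp add: players_def)
qed

lemma equilibrium_candidates_product_game:
  assumes "product_game m U v a"
  shows "equilibrium_candidates m U = {g \<in> mixed_profiles m. \<forall>i\<in>players m.
           0 < g i \<and> g i < 1 \<longrightarrow> (\<exists>j\<in>players m - {i}. g j = a i j)}"
  using product_game_lam_eq_0_iff[OF assms] by (auto simp: equilibrium_candidates_def)

lemma mixed_profiles_range:
  "g \<in> mixed_profiles m \<Longrightarrow> i \<in> players m \<Longrightarrow> 0 \<le> g i \<and> g i \<le> 1"
  by (auto simp: mixed_profiles_def PiE_def Pi_def)

lemma Lset_eq_players_minus_interior:
  "g \<in> mixed_profiles m \<Longrightarrow> Lset m g = players m - {i\<in>players m. 0 < g i \<and> g i < 1}"
  using mixed_profiles_range[of g m] by (force simp: Lset_def)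

lemma EC_subset_equilibrium_candidates:
  assumes game: "product_game m U v a" and p: "p permutes players m"
  shows "EC m a p \<subseteq> equilibrium_candidates m U"
proof
  fix g assume "g \<in> EC m a p"
  then have g: "g \<in> mixed_profiles m" "Lset m g = fixpts m p"
    and partner: "\<forall>j\<in>players m - fixpts m p. g j = a (p j) j"
    by (auto simp: EC_def)
  have "\<exists>j\<in>players m - {i}. g j = a i j" if i: "i \<in> players m" "0 < g i" "g i < 1" for i
  proof
    let ?j = "inv p i"
    have pj: "p ?j = i" using permutes_inverses(1)[OF p] .
    have "i \<notin> Lset m g" using i by (auto simp: Lset_def)
    then have "p i \<noteq> i" using g(2) i by (auto simp: fixpts_def)
    then have ji: "?j \<noteq> i" using pj by auto
    have jP: "?j \<in> players m"
      using permutes_in_image[OF permutes_inv[OF p]] i by simp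
    show "?j \<in> players m - {i}" using ji jP by simp
    show "g ?j = a i ?j" using partner jP ji pj by (auto simp: fixpts_def)
  qed
  with g(1) show "g \<in> equilibrium_candidates m U"
    by (simp add: equilibrium_candidates_product_game[OF game])
qed

lemma equilibrium_candidate_in_EC:
  assumes game: "product_game m U v a" and g: "g \<in> equilibrium_candidates m U"
  obtains p where "p permutes players m" "g \<in> EC m a p"
proof -
  let ?P = "players m"
  define N where "N = {i\<in>?P. 0 < g i \<and> g i < 1}"
  have gm: "g \<in> mixed_profiles m"
    and "\<forall>i\<in>N. \<exists>j\<in>?P - {i}. g j = a i j"
    using g by (auto simp: equilibrium_candidates_product_game[OF game] N_def)
  then obtain c where c: "\<And>i. i \<in> N \<Longrightarrow> c i \<in> ?P \<and> c i \<noteq> i \<and> g (c i) = a i (c i)"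
    using bchoice[of N "\<lambda>i j. j \<in> ?P - {i} \<and> g j = a i j"] by auto
  have thresholds: "\<And>i j. i \<in> ?P \<Longrightarrow> j \<in> ?P \<Longrightarrow> i \<noteq> j \<Longrightarrow> 0 < a i j \<and> a i j < 1"
    and distinct: "\<And>i1 i2 j. j \<in> ?P \<Longrightarrow> i1 \<in> ?P \<Longrightarrow> i2 \<in> ?P \<Longrightarrow> i1 \<noteq> i2 \<Longrightarrow> i1 \<noteq> j
      \<Longrightarrow> i2 \<noteq> j \<Longrightarrow> a i1 j \<noteq> a i2 j"
    using game unfolding product_game_def by blast+
  have "c ` N \<subseteq> N"
    using c thresholds by (fastforce simp: N_def)
  moreover have "inj_on c N"
    using c distinct by (intro inj_onI) (metis N_def mem_Collect_eq)
  ultimately obtain p where p: "p permutes N" and cp: "\<And>x. x \<in> N \<Longrightarrow> c (p x) = x"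
    using inj_on_endo_inverse_permutes[of N c] by (auto simp: N_def players_def)
  have pN: "\<And>x. x \<in> N \<Longrightarrow> p x \<in> N" using permutes_in_image[OF p] by simp
  have "p x \<noteq> x" if "x \<in> N" for x using c[OF that] cp[OF that] by metis
  then have fixpoints: "fixpts m p = ?P - N"
    using permutes_not_in[OF p] by (auto simp: fixpts_def N_def)
  then have "fixpts m p = Lset m g"
    by (simp add: Lset_eq_players_minus_interior[OF gm] N_def)
  moreover have "g j = a (p j) j" if "j \<in> ?P - fixpts m p" for j
  proof -
    have j: "j \<in> N" using that fixpoints by blast
    show ?thesis using c[OF pN[OF j]] cp[OF j] by simp
  qed
  ultimately have "g \<in> EC m a p" using gm by (auto simp: EC_def)
  moreover have "p permutes ?P" using permutes_subset[OF p] by (auto simp: N_def)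
  ultimately show ?thesis using that by blast
qed

lemma disjoint_family_on_EC:
  assumes game: "product_game m U v a"
  shows "disjoint_family_on (EC m a) {p. p permutes players m}"
  unfolding disjoint_family_on_def
proof (intro ballI impI, rule ccontr)
  fix p q
  assume p: "p \<in> {p. p permutes players m}" and q: "q \<in> {p. p permutes players m}"
    and "p \<noteq> q" and "EC m a p \<inter> EC m a q \<noteq> {}"
  then obtain g where "g \<in> EC m a p" "g \<in> EC m a q" by blast
  then have F: "fixpts m p = fixpts m q"
    and gp: "\<forall>j\<in>players m - fixpts m p. g j = a (p j) j"
    and gq: "\<forall>j\<in>players m - fixpts m q. g j = a (q j) j"
    by (auto simp: EC_def)
  from \<open>p \<noteq> q\<close> obtain x where x: "p x \<noteq> q x" by blast
  then have "x \<in> players m" using p q by (metis mem_Collect_eq permutes_not_in)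
  moreover have "x \<notin> fixpts m p" "x \<notin> fixpts m q" using F x by (auto simp: fixpts_def)
  ultimately have "a (p x) x = a (q x) x" and "p x \<noteq> x" and "q x \<noteq> x"
    using gp gq by (metis DiffI, auto simp: fixpts_def)
  moreover have "p x \<in> players m" "q x \<in> players m"
    using p q \<open>x \<in> players m\<close> by (auto simp: permutes_in_image)
  moreover have "\<forall>j\<in>players m. \<forall>i1\<in>players m. \<forall>i2\<in>players m.
      i1 \<noteq> i2 \<and> i1 \<noteq> j \<and> i2 \<noteq> j \<longrightarrow> a i1 j \<noteq> a i2 j"
    using game unfolding product_game_def by blast
  ultimately show False using x \<open>x \<in> players m\<close> by blast
qed

lemma card_EC:
  assumes game: "product_game m U v a" and p: "p permutes players m"
  shows "card (EC m a p) = 2 ^ card (fixpts m p)"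
proof -
  let ?P = "players m" and ?F = "fixpts m p"
  have FP: "?F \<subseteq> ?P" by (auto simp: fixpts_def)
  have threshold: "0 < a (p x) x \<and> a (p x) x < 1" if "x \<in> ?P - ?F" for x
    using game that permutes_in_image[OF p, of x] unfolding product_game_def fixpts_def by auto
  define extend where
    "extend f x = (if x \<in> ?F then f x else if x \<in> ?P then a (p x) x else undefined)"
    for f :: "nat \<Rightarrow> real" and x
  have "bij_betw (\<lambda>g. restrict g ?F) (EC m a p) (PiE ?F (\<lambda>_. {0, 1}))"
  proof (rule bij_betw_byWitness[where f' = extend])
    show "\<forall>g\<in>EC m a p. extend (restrict g ?F) = g"
      by (auto simp: extend_def EC_def mixed_profiles_def PiE_def extensional_def fun_eq_iff)
    show "\<forall>f\<in>PiE ?F (\<lambda>_. {0, 1}). restrict (extend f) ?F = f"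
      by (auto simp: extend_def PiE_def extensional_def fun_eq_iff)
    show "(\<lambda>g. restrict g ?F) ` EC m a p \<subseteq> PiE ?F (\<lambda>_. {0, 1})"
      by (auto simp: EC_def Lset_def)
    show "extend ` PiE ?F (\<lambda>_. {0, 1}) \<subseteq> EC m a p"
    proof clarify
      fix f assume f: "f \<in> PiE ?F (\<lambda>_. {0, 1::real})"
      have "extend f \<in> mixed_profiles m"
        using f FP threshold
        by (fastforce simp: extend_def mixed_profiles_def PiE_def Pi_def extensional_def less_imp_le)
      moreover have "Lset m (extend f) = ?F"
        using f FP threshold by (fastforce simp: extend_def Lset_def)
      ultimately show "extend f \<in> EC m a p" by (auto simp: EC_def extend_def)
    qed
  qed
  then have "card (EC m a p) = card (PiE ?F (\<lambda>_. {0, 1::real}))" by (rule bij_betw_same_card)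
  also have "\<dots> = 2 ^ card ?F"
    using finite_subset[OF FP] by (simp add: card_PiE players_def numeral_2_eq_2)
  finally show ?thesis .
qed

theorem theorem3p7:
  fixes m :: nat and U :: "nat \<Rightarrow> (nat \<Rightarrow> bool) \<Rightarrow> real"
    and v :: "nat \<Rightarrow> nat" and a :: "nat \<Rightarrow> nat \<Rightarrow> real"
  assumes "m \<ge> 1"
    and "product_game m U v a"
  shows "equilibrium_candidates m U = (\<Union>p\<in>{p. p permutes players m}. EC m a p)
    \<and> disjoint_family_on (EC m a) {p. p permutes players m}
    \<and> (\<forall>p. p permutes players m \<longrightarrow> card (EC m a p) = 2 ^ card (fixpts m p))
    \<and> card (equilibrium_candidates m U) = (\<Sum>l=0..m. (m choose l) * 2 ^ l * subfact (m - l))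
    \<and> card (equilibrium_candidates m U) = Vnum m"
proof -
  let ?Perm = "{p. p permutes players m}"
  have union: "equilibrium_candidates m U = (\<Union>p\<in>?Perm. EC m a p)"
    using EC_subset_equilibrium_candidates[OF assms(2)] equilibrium_candidate_in_EC[OF assms(2)]
    by blast
  have card: "card (EC m a p) = 2 ^ card (fixpts m p)" if "p \<in> ?Perm" for p
    using card_EC[OF assms(2)] that by simp
  then have "finite (EC m a p)" if "p \<in> ?Perm" for p
    using that by (metis card_ge_0_finite pos2 zero_less_power)
  then have "card (equilibrium_candidates m U) = (\<Sum>p\<in>?Perm. card (EC m a p))"
    unfolding union
    by (intro card_UN_disjoint' disjoint_family_on_EC[OF assms(2)])
      (simp_all add: finite_permutations players_def)
  also have "\<dots> = (\<Sum>p\<in>?Perm. 2 ^ card (fixpts m p))" using card by simp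
  also have "\<dots> = (\<Sum>l=0..m. (m choose l) * 2 ^ l * subfact (m - l))"
    using sum_power_card_fixpoints[of "players m" m 2] by (simp add: players_def fixpts_def)
  finally show ?thesis
    using union disjoint_family_on_EC[OF assms(2)] card by (simp add: Vnum_def)
qed

end
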